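(* Let $\Omega\subseteq\mathbb{R}^n$ be open, let $f_1,\dots,f_m:\Omega\to\mathbb{R}$ be differentiable, and let $W\subseteq\Omega$ be convex and bounded. Suppose there is $L\ge 0$ such that $$\|\nabla f_i(y)-\nabla f_i(z)\|\le L\|y-z\|\qquad\text{for all }y,z\in W,\ i=1,\dots,m,$$ and set $M=\sup_{i=1,\dots,m,\ x\in W}\|\nabla f_i(x)\|$ (which is finite). Then for all $y,z\in W$: 1. $\|\Lambda f(y)-\Lambda f(z)\|\le\sqrt{2LM}\,\|y-z\|^{1/2}$, so $x\mapsto\Lambda f(x)$ is Hölder continuous on $W$ with exponent $1/2$; 2. $\big|\,\|\Lambda f(y)\|-\|\Lambda f(z)\|\,\big|\le L\|y-z\|$, so $x\mapsto\|\Lambda f(x)\|$ is Lipschitz continuous on $W$.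
   Context: $\mathbb{R}^n$ carries the standard inner product $\langle\cdot,\cdot\rangle$ and Euclidean norm $\|\cdot\|$. For $x\in\Omega$, the (multiobjective) steepest descent direction is $$\Lambda f(x):=\operatorname{argmin}_{v\in\mathbb{R}^n}\Big(\max_{i=1,\dots,m}\langle v,\nabla f_i(x)\rangle+\tfrac12\|v\|^2\Big),$$ (the minimizer is unique since the objective is strongly convex). *)

theory Defs
  imports "HOL-Analysis.Analysis"
begin

definition grad :: "('a::euclidean_space \<Rightarrow> real) \<Rightarrow> 'a \<Rightarrow> 'a" where
  "grad g x = (THE v. (g has_derivative (\<lambda>h. v \<bullet> h)) (at x))"

definition sd_obj :: "(nat \<Rightarrow> 'a::euclidean_space \<Rightarrow> real) \<Rightarrow> nat \<Rightarrow> 'a \<Rightarrow> 'a \<Rightarrow> real" where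
  "sd_obj f m x v = (MAX i\<in>{1..m}. v \<bullet> grad (f i) x) + (1/2) * (norm v)\<^sup>2"

definition steepest_dir :: "(nat \<Rightarrow> 'a::euclidean_space \<Rightarrow> real) \<Rightarrow> nat \<Rightarrow> 'a \<Rightarrow> 'a" where
  "steepest_dir f m x = (THE v. \<forall>w. sd_obj f m x v \<le> sd_obj f m x w)"

end

theory Submission
  imports Defs
begin

text \<open>Write \<open>h(w) = max\<^sub>i \<langle>w, g\<^sub>i\<rangle>\<close> for the gradients \<open>g\<^sub>i\<close> at a point. The direction \<open>v\<close>
  minimises the strongly convex function \<open>h(w) + \<parallel>w\<parallel>\<^sup>2/2\<close>, so it satisfies the variational
  inequality \<open>h(w) - h(v) + \<langle>v, w - v\<rangle> \<ge> 0\<close> for all \<open>w\<close>; as \<open>h\<close> is positively homogeneous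
  this forces \<open>h(v) = -\<parallel>v\<parallel>\<^sup>2\<close> and hence \<open>\<parallel>v\<parallel> \<le> \<parallel>g\<^sub>i\<parallel> \<le> M\<close>. If the gradients move by at most
  \<open>e = L\<parallel>y - z\<parallel>\<close>, then \<open>h\<close> moves by at most \<open>e\<parallel>w\<parallel>\<close>; adding the two variational inequalities
  at the minimisers \<open>u\<close>, \<open>v\<close> gives \<open>\<parallel>u - v\<parallel>\<^sup>2 \<le> (\<parallel>u\<parallel> + \<parallel>v\<parallel>) e \<le> 2Me\<close>, while testing the
  minimality of \<open>v\<close> against the rescaled competitor \<open>(1 - e/\<parallel>u\<parallel>) u\<close> gives \<open>\<parallel>u\<parallel> - \<parallel>v\<parallel> \<le> e\<close>.\<close>

definition max_inner :: "'i set \<Rightarrow> ('i \<Rightarrow> 'a::real_inner) \<Rightarrow> 'a \<Rightarrow> real" where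
  "max_inner I g w = (MAX i\<in>I. w \<bullet> g i)"

definition sd_fun :: "'i set \<Rightarrow> ('i \<Rightarrow> 'a::real_inner) \<Rightarrow> 'a \<Rightarrow> real" where
  "sd_fun I g w = max_inner I g w + (norm w)\<^sup>2 / 2"

lemma sd_obj_eq_sd_fun: "sd_obj f m x = sd_fun {1..m} (\<lambda>i. grad (f i) x)"
  by (auto simp: sd_obj_def sd_fun_def max_inner_def)

context
  fixes I :: "'i set"
  assumes finite_I: "finite I" and I_ne: "I \<noteq> {}"
begin

lemma max_inner_ge: "i \<in> I \<Longrightarrow> w \<bullet> g i \<le> max_inner I g w"
  unfolding max_inner_def using finite_I by (intro Max_ge) auto

lemma max_inner_le: "(\<And>i. i \<in> I \<Longrightarrow> w \<bullet> g i \<le> c) \<Longrightarrow> max_inner I g w \<le> c"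
  unfolding max_inner_def using finite_I I_ne by auto

lemma max_inner_attained: obtains i where "i \<in> I" "max_inner I g w = w \<bullet> g i"
proof -
  have "max_inner I g w \<in> (\<lambda>i. w \<bullet> g i) ` I"
    unfolding max_inner_def using finite_I I_ne by (intro Max_in) auto
  then show thesis using that by auto
qed

lemma max_inner_convex_comb:
  assumes "0 \<le> t" "t \<le> 1"
  shows "max_inner I g ((1 - t) *\<^sub>R v + t *\<^sub>R w) \<le> (1 - t) * max_inner I g v + t * max_inner I g w"
proof (rule max_inner_le)
  fix i assume i: "i \<in> I"
  have "((1 - t) *\<^sub>R v + t *\<^sub>R w) \<bullet> g i = (1 - t) * (v \<bullet> g i) + t * (w \<bullet> g i)"
    by (simp add: inner_add_left)
  also have "\<dots> \<le> (1 - t) * max_inner I g v + t * max_inner I g w"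
    using max_inner_ge[OF i, of v g] max_inner_ge[OF i, of w g] assms
    by (intro add_mono mult_left_mono) auto
  finally show "((1 - t) *\<^sub>R v + t *\<^sub>R w) \<bullet> g i \<le> \<dots>" .
qed

lemma max_inner_scaleR:
  assumes "0 \<le> s"
  shows "max_inner I g (s *\<^sub>R w) = s * max_inner I g w"
proof (rule antisym)
  show "max_inner I g (s *\<^sub>R w) \<le> s * max_inner I g w"
    using max_inner_ge[of _ w g] assms by (intro max_inner_le) (auto intro: mult_left_mono)
  obtain i where "i \<in> I" "max_inner I g w = w \<bullet> g i" by (rule max_inner_attained)
  then show "s * max_inner I g w \<le> max_inner I g (s *\<^sub>R w)"
    using max_inner_ge[of i "s *\<^sub>R w" g] by simp
qed

lemma max_inner_zero: "max_inner I g 0 = 0"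
  using max_inner_scaleR[of 0 g 0] by simp

lemma max_inner_perturb:
  assumes "\<And>i. i \<in> I \<Longrightarrow> norm (g i - h i) \<le> e"
  shows "max_inner I g w \<le> max_inner I h w + norm w * e"
proof (rule max_inner_le)
  fix i assume i: "i \<in> I"
  have "w \<bullet> g i = w \<bullet> h i + w \<bullet> (g i - h i)"
    by (simp add: inner_diff_right)
  also have "\<dots> \<le> max_inner I h w + norm w * norm (g i - h i)"
    using max_inner_ge[OF i] norm_cauchy_schwarz by (intro add_mono) auto
  also have "\<dots> \<le> max_inner I h w + norm w * e"
    using assms[OF i] by (simp add: mult_left_mono)
  finally show "w \<bullet> g i \<le> max_inner I h w + norm w * e" .
qed

lemma lipschitz_on_max_inner: "(\<Sum>i\<in>I. norm (g i))-lipschitz_on UNIV (max_inner I g)"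
proof (rule lipschitz_onI)
  define B where "B = (\<Sum>i\<in>I. norm (g i))"
  have shift: "max_inner I g v \<le> max_inner I g w + dist v w * B" for v w
  proof (rule max_inner_le)
    fix i assume i: "i \<in> I"
    have "v \<bullet> g i = w \<bullet> g i + (v - w) \<bullet> g i"
      by (simp add: inner_diff_left)
    also have "\<dots> \<le> max_inner I g w + norm (v - w) * norm (g i)"
      using max_inner_ge[OF i] norm_cauchy_schwarz by (intro add_mono) auto
    also have "\<dots> \<le> max_inner I g w + dist v w * B"
      unfolding B_def dist_norm using finite_I i by (intro add_left_mono mult_left_mono member_le_sum) auto
    finally show "v \<bullet> g i \<le> max_inner I g w + dist v w * B" .
  qed
  show "dist (max_inner I g v) (max_inner I g w) \<le> B * dist v w" for v w
    using shift[of v w] shift[of w v] by (simp add: dist_real_def dist_commute abs_le_iff algebra_simps)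
  show "0 \<le> B"
    unfolding B_def by (rule sum_nonneg) simp
qed

lemma continuous_on_sd_fun: "continuous_on UNIV (sd_fun I g)"
proof -
  have "continuous_on UNIV (max_inner I g)"
    using lipschitz_on_max_inner by (rule lipschitz_on_continuous_on)
  then show ?thesis
    unfolding sd_fun_def[abs_def] by (intro continuous_intros) auto
qed

lemma sd_fun_min_variational_ineq:
  assumes opt: "\<And>w'. sd_fun I g v \<le> sd_fun I g w'"
  shows "0 \<le> max_inner I g w - max_inner I g v + v \<bullet> (w - v)"
proof (rule ccontr)
  define A where "A = max_inner I g w - max_inner I g v + v \<bullet> (w - v)"
  define d where "d = w - v"
  assume "\<not> ?thesis"
  then have A: "A < 0"
    unfolding A_def by simp
  then have "d \<noteq> 0"
    unfolding A_def d_def by auto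
  then have nd: "(norm d)\<^sup>2 > 0"
    by simp
  text \<open>Along the segment from \<open>v\<close> to \<open>w\<close> the objective decreases to first order at rate \<open>A\<close>;
    a step of length \<open>t \<le> -A / \<parallel>d\<parallel>\<^sup>2\<close> keeps the quadratic term below that gain.\<close>
  define t where "t = min 1 (- A / (norm d)\<^sup>2)"
  have t: "0 < t" "t \<le> 1" "t * (norm d)\<^sup>2 \<le> - A"
    using A nd unfolding t_def by (auto simp: min_def field_simps)
  have "v + t *\<^sub>R d = (1 - t) *\<^sub>R v + t *\<^sub>R w"
    unfolding d_def by (simp add: algebra_simps)
  then have h: "max_inner I g (v + t *\<^sub>R d) \<le> (1 - t) * max_inner I g v + t * max_inner I g w"
    using t by (simp add: max_inner_convex_comb)
  have n: "(norm (v + t *\<^sub>R d))\<^sup>2 / 2 = (norm v)\<^sup>2 / 2 + t * (v \<bullet> d) + t\<^sup>2 * (norm d)\<^sup>2 / 2"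
    unfolding power2_norm_eq_inner
    by (simp add: inner_add_left inner_add_right inner_commute power2_eq_square algebra_simps)
  have "sd_fun I g v \<le> sd_fun I g (v + t *\<^sub>R d)"
    by (rule opt)
  moreover have "t * A = t * max_inner I g w - t * max_inner I g v + t * (v \<bullet> d)"
    unfolding A_def d_def by (simp add: algebra_simps)
  moreover have "(1 - t) * max_inner I g v = max_inner I g v - t * max_inner I g v"
    by (simp add: algebra_simps)
  ultimately have "0 \<le> t * A + t\<^sup>2 * (norm d)\<^sup>2 / 2"
    using h n unfolding sd_fun_def by linarith
  moreover have "t\<^sup>2 * (norm d)\<^sup>2 / 2 \<le> t * (- A) / 2"
    using mult_left_mono[OF t(3), of t] t by (simp add: power2_eq_square algebra_simps)
  moreover have "t * A < 0"
    using t A by (simp add: mult_pos_neg)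
  ultimately show False
    by linarith
qed

lemma sd_fun_min_unique:
  assumes "\<And>w. sd_fun I g v \<le> sd_fun I g w" and "\<And>w. sd_fun I g v' \<le> sd_fun I g w"
  shows "v = v'"
proof -
  have "0 \<le> max_inner I g v' - max_inner I g v + v \<bullet> (v' - v)"
    "0 \<le> max_inner I g v - max_inner I g v' + v' \<bullet> (v - v')"
    using assms by (simp_all add: sd_fun_min_variational_ineq)
  then have "(v - v') \<bullet> (v - v') \<le> 0"
    by (simp add: inner_diff_left inner_diff_right inner_commute algebra_simps)
  then show ?thesis
    using inner_ge_zero[of "v - v'"] by simp
qed

lemma max_inner_sd_fun_min:
  assumes opt: "\<And>w. sd_fun I g v \<le> sd_fun I g w"
  shows "max_inner I g v = - (norm v)\<^sup>2"
proof -
  have "0 \<le> max_inner I g 0 - max_inner I g v + v \<bullet> (0 - v)"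
    "0 \<le> max_inner I g (2 *\<^sub>R v) - max_inner I g v + v \<bullet> (2 *\<^sub>R v - v)"
    using opt by (simp_all only: sd_fun_min_variational_ineq)
  then show ?thesis
    by (simp add: max_inner_zero max_inner_scaleR power2_norm_eq_inner algebra_simps)
qed

lemma norm_sd_fun_min_le:
  assumes opt: "\<And>w. sd_fun I g v \<le> sd_fun I g w" and i: "i \<in> I"
  shows "norm v \<le> norm (g i)"
proof -
  have "norm v * norm v = - max_inner I g v"
    using max_inner_sd_fun_min[OF opt] by (simp add: power2_eq_square)
  also have "\<dots> \<le> (- v) \<bullet> g i"
    using max_inner_ge[OF i, of v g] by simp
  also have "\<dots> \<le> norm v * norm (g i)"
    using norm_cauchy_schwarz[of "- v" "g i"] by simp
  finally show ?thesis
    by (cases "v = 0") auto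
qed

lemma dist_sd_fun_min_sq_le:
  assumes e: "\<And>i. i \<in> I \<Longrightarrow> norm (g i - h i) \<le> e"
    and opt_u: "\<And>w. sd_fun I g u \<le> sd_fun I g w" and opt_v: "\<And>w. sd_fun I h v \<le> sd_fun I h w"
  shows "(norm (u - v))\<^sup>2 \<le> (norm u + norm v) * e"
proof -
  have e': "\<And>i. i \<in> I \<Longrightarrow> norm (h i - g i) \<le> e"
    using e by (simp add: norm_minus_commute)
  have "0 \<le> max_inner I g v - max_inner I g u + u \<bullet> (v - u)"
    by (rule sd_fun_min_variational_ineq[OF opt_u])
  moreover have "0 \<le> max_inner I h u - max_inner I h v + v \<bullet> (u - v)"
    by (rule sd_fun_min_variational_ineq[OF opt_v])
  moreover have "max_inner I g v \<le> max_inner I h v + norm v * e"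
    by (rule max_inner_perturb[OF e])
  moreover have "max_inner I h u \<le> max_inner I g u + norm u * e"
    by (rule max_inner_perturb[OF e'])
  moreover have "(norm (u - v))\<^sup>2 = - (u \<bullet> (v - u) + v \<bullet> (u - v))"
    by (simp add: power2_norm_eq_inner inner_diff_left inner_diff_right inner_commute algebra_simps)
  ultimately show ?thesis
    by (simp add: algebra_simps)
qed

lemma norm_sd_fun_min_diff_le:
  assumes e: "\<And>i. i \<in> I \<Longrightarrow> norm (g i - h i) \<le> e" and "0 \<le> e"
    and opt_u: "\<And>w. sd_fun I g u \<le> sd_fun I g w" and opt_v: "\<And>w. sd_fun I h v \<le> sd_fun I h w"
  shows "norm u - norm v \<le> e"
proof (cases "norm u \<le> e")
  case True
  then show ?thesis
    using norm_ge_zero[of v] by linarith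
next
  case False
  define a where "a = norm u"
  define s where "s = (a - e) / a"
  have a: "e < a" "0 < a"
    using False \<open>0 \<le> e\<close> unfolding a_def by auto
  then have s: "0 \<le> s"
    unfolding s_def by simp
  have "max_inner I h u \<le> max_inner I g u + a * e"
    unfolding a_def by (rule max_inner_perturb) (use e in \<open>simp add: norm_minus_commute\<close>)
  also have "\<dots> = - a\<^sup>2 + a * e"
    using max_inner_sd_fun_min[OF opt_u] unfolding a_def by simp
  finally have hu: "max_inner I h u \<le> - a\<^sup>2 + a * e" .
  have "- (norm v)\<^sup>2 / 2 = sd_fun I h v"
    unfolding sd_fun_def max_inner_sd_fun_min[OF opt_v] by simp
  also have "\<dots> \<le> sd_fun I h (s *\<^sub>R u)"
    by (rule opt_v)
  also have "\<dots> = s * max_inner I h u + s\<^sup>2 * a\<^sup>2 / 2"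
    unfolding sd_fun_def max_inner_scaleR[OF s] using s by (simp add: a_def power_mult_distrib)
  also have "\<dots> \<le> s * (- a\<^sup>2 + a * e) + s\<^sup>2 * a\<^sup>2 / 2"
    using hu s by (simp add: mult_left_mono)
  also have "\<dots> = - (a - e)\<^sup>2 / 2"
    using a unfolding s_def by (simp add: field_simps power2_eq_square)
  finally have "(a - e)\<^sup>2 \<le> (norm v)\<^sup>2"
    by simp
  then have "a - e \<le> norm v"
    using a by (simp add: power2_le_iff_abs_le)
  then show ?thesis
    unfolding a_def by simp
qed

end

lemma sd_fun_min_exists:
  fixes g :: "'i \<Rightarrow> 'a::euclidean_space"
  assumes "finite I" and "i \<in> I"
  obtains v where "\<And>w. sd_fun I g v \<le> sd_fun I g w"
proof -
  have ne: "I \<noteq> {}"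
    using \<open>i \<in> I\<close> by blast
  define R where "R = 2 * norm (g i)"
  have "\<exists>v\<in>cball 0 R. \<forall>w\<in>cball 0 R. sd_fun I g v \<le> sd_fun I g w"
    using continuous_on_sd_fun[OF assms(1) ne]
    by (intro continuous_attains_inf) (auto intro: continuous_on_subset simp: R_def)
  then obtain v where v_min: "\<And>w. w \<in> cball 0 R \<Longrightarrow> sd_fun I g v \<le> sd_fun I g w"
    by blast
  have "sd_fun I g v \<le> 0"
    using v_min[of 0] max_inner_zero[OF assms(1) ne, of g] by (simp add: sd_fun_def R_def)
  moreover have "0 < sd_fun I g w" if "w \<notin> cball 0 R" for w
  proof -
    text \<open>Outside the ball \<open>\<parallel>w\<parallel> \<le> 2\<parallel>g\<^sub>i\<parallel>\<close> the quadratic term beats the linear one.\<close>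
    have "- (norm w * norm (g i)) \<le> w \<bullet> g i"
      using norm_cauchy_schwarz[of "- w" "g i"] by simp
    also have "\<dots> \<le> max_inner I g w"
      by (rule max_inner_ge[OF assms(1) ne \<open>i \<in> I\<close>])
    finally have "norm w * (norm w / 2 - norm (g i)) \<le> sd_fun I g w"
      unfolding sd_fun_def by (simp add: power2_eq_square algebra_simps)
    moreover have "0 < norm w * (norm w / 2 - norm (g i))"
      using that unfolding R_def by (intro mult_pos_pos) auto
    ultimately show ?thesis
      by linarith
  qed
  ultimately have "sd_fun I g v \<le> sd_fun I g w" for w
    using v_min[of w] by force
  then show thesis
    by (rule that)
qed

lemma steepest_dir_minimises:
  fixes f :: "nat \<Rightarrow> 'a::euclidean_space \<Rightarrow> real"
  assumes "1 \<le> m"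
  shows "sd_fun {1..m} (\<lambda>i. grad (f i) x) (steepest_dir f m x) \<le> sd_fun {1..m} (\<lambda>i. grad (f i) x) w"
proof -
  let ?g = "\<lambda>i. grad (f i) x"
  obtain v where v: "\<And>w. sd_fun {1..m} ?g v \<le> sd_fun {1..m} ?g w"
    using sd_fun_min_exists[of "{1..m}" 1] assms by auto
  have "steepest_dir f m x = v"
    unfolding steepest_dir_def sd_obj_eq_sd_fun
  proof (rule the_equality)
    fix v' assume "\<forall>w. sd_fun {1..m} ?g v' \<le> sd_fun {1..m} ?g w"
    then show "v' = v"
      using assms v by (intro sd_fun_min_unique[of "{1..m}" ?g]) auto
  qed (use v in blast)
  then show ?thesis
    using v by simp
qed

lemma bdd_above_norm_lipschitz_family:
  fixes g :: "'i \<Rightarrow> 'a::euclidean_space \<Rightarrow> 'b::euclidean_space"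
  assumes "finite I" "bounded W" "0 \<le> L"
    and "\<And>i y z. i \<in> I \<Longrightarrow> y \<in> W \<Longrightarrow> z \<in> W \<Longrightarrow> norm (g i y - g i z) \<le> L * norm (y - z)"
  shows "bdd_above {norm (g i x) | i x. i \<in> I \<and> x \<in> W}"
proof -
  have "L-lipschitz_on W (g i)" if "i \<in> I" for i
    using assms(3) assms(4)[OF that] by (intro lipschitz_onI) (auto simp: dist_norm)
  then have "bounded (g i ` W)" if "i \<in> I" for i
    using that assms(2) by (blast intro: bounded_uniformly_continuous_image lipschitz_on_uniformly_continuous)
  then have "bounded (\<Union>i\<in>I. g i ` W)"
    using assms(1) by blast
  then obtain C where "\<And>y. y \<in> (\<Union>i\<in>I. g i ` W) \<Longrightarrow> norm y \<le> C"
    unfolding bounded_iff by blast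
  then show ?thesis
    by (intro bdd_aboveI[of _ C]) auto
qed

theorem theorem3p1:
  fixes f :: "nat \<Rightarrow> 'a::euclidean_space \<Rightarrow> real"
    and m :: nat and \<Omega> W :: "'a set" and L :: real
  assumes "m \<ge> 1"
    and "open \<Omega>"
    and "\<And>i x. i \<in> {1..m} \<Longrightarrow> x \<in> \<Omega> \<Longrightarrow> f i differentiable (at x)"
    and "W \<subseteq> \<Omega>" and "convex W" and "bounded W"
    and "L \<ge> 0"
    and "\<And>i y z. i \<in> {1..m} \<Longrightarrow> y \<in> W \<Longrightarrow> z \<in> W \<Longrightarrow>
           norm (grad (f i) y - grad (f i) z) \<le> L * norm (y - z)"
  defines "M \<equiv> Sup {norm (grad (f i) x) | i x. i \<in> {1..m} \<and> x \<in> W}"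
  shows "\<forall>y\<in>W. \<forall>z\<in>W.
           norm (steepest_dir f m y - steepest_dir f m z) \<le> sqrt (2 * L * M) * sqrt (norm (y - z))
         \<and> \<bar>norm (steepest_dir f m y) - norm (steepest_dir f m z)\<bar> \<le> L * norm (y - z)"
proof (intro ballI)
  fix y z assume y: "y \<in> W" and z: "z \<in> W"
  let ?I = "{1..m}" and ?u = "steepest_dir f m y" and ?v = "steepest_dir f m z" and ?e = "L * norm (y - z)"
  have I: "finite ?I" "?I \<noteq> {}" "1 \<in> ?I"
    using \<open>m \<ge> 1\<close> by auto
  note opt = steepest_dir_minimises[OF \<open>m \<ge> 1\<close>, of f]
  have grad_le_M: "norm (grad (f 1) x) \<le> M" if "x \<in> W" for x
    unfolding M_def using that I
    by (intro cSup_upper bdd_above_norm_lipschitz_family[OF _ \<open>bounded W\<close> \<open>L \<ge> 0\<close> assms(8)]) auto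
  have norms: "norm ?u \<le> M" "norm ?v \<le> M"
    using norm_sd_fun_min_le[OF I(1,2) opt I(3)] grad_le_M y z by (meson order_trans)+
  have gap: "norm (grad (f i) y - grad (f i) z) \<le> ?e" "norm (grad (f i) z - grad (f i) y) \<le> ?e"
    if "i \<in> ?I" for i
    using assms(8)[OF that y z] by (simp_all add: norm_minus_commute)
  have "(norm (?u - ?v))\<^sup>2 \<le> (norm ?u + norm ?v) * ?e"
    by (rule dist_sd_fun_min_sq_le[OF I(1,2) gap(1) opt opt])
  also have "\<dots> \<le> 2 * L * M * norm (y - z)"
    using norms \<open>L \<ge> 0\<close> mult_right_mono[of "norm ?u + norm ?v" "2 * M" ?e] by (simp add: algebra_simps)
  finally have "norm (?u - ?v) \<le> sqrt (2 * L * M * norm (y - z))"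
    by (simp add: real_le_rsqrt)
  moreover have "norm ?u - norm ?v \<le> ?e" "norm ?v - norm ?u \<le> ?e"
    using norm_sd_fun_min_diff_le[OF I(1,2) gap(1) _ opt opt]
      norm_sd_fun_min_diff_le[OF I(1,2) gap(2) _ opt opt] \<open>L \<ge> 0\<close> by simp_all
  ultimately show "norm (?u - ?v) \<le> sqrt (2 * L * M) * sqrt (norm (y - z)) \<and> \<bar>norm ?u - norm ?v\<bar> \<le> ?e"
    by (simp add: real_sqrt_mult)
qed

end
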